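(* Let $G$ be a triangle-free graph on $n$ vertices. Then $\tilde b(G)\le\Gamma_4^n$, where $\Gamma_4\approx1.2434$ is the unique root in $[1,2]$ of $x^8-x^3-x^2-x-1=0$.
   Context: $\mathrm{Ind}(G)$ is the independence complex of $G$ (including the empty face), and $\tilde b(G)=\sum_{i\ge-1}\dim_{\mathbb{K}}\widetilde H_i(\mathrm{Ind}(G);\mathbb{K})$ for a fixed field $\mathbb{K}$; the empty graph has $\tilde b=1$. *)

theory Defs
  imports Complex_Main "HOL-Library.Function_Algebras"
begin

definition simple_graph :: "'a set \<Rightarrow> ('a \<Rightarrow> 'a \<Rightarrow> bool) \<Rightarrow> bool" where
  "simple_graph V E \<longleftrightarrow> finite V \<and> (\<forall>x y. E x y \<longrightarrow> E y x) \<and> (\<forall>x. \<not> E x x)"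

definition triangle_free :: "'a set \<Rightarrow> ('a \<Rightarrow> 'a \<Rightarrow> bool) \<Rightarrow> bool" where
  "triangle_free V E \<longleftrightarrow>
     \<not> (\<exists>x\<in>V. \<exists>y\<in>V. \<exists>z\<in>V. E x y \<and> E y z \<and> E x z)"

definition ind_faces :: "'a set \<Rightarrow> ('a \<Rightarrow> 'a \<Rightarrow> bool) \<Rightarrow> 'a set set" where
  "ind_faces V E = {S. S \<subseteq> V \<and> (\<forall>x\<in>S. \<forall>y\<in>S. \<not> E x y)}"

text \<open>Augmented (reduced) simplicial chains with coefficients in a field 'k:
  k-chains are 'k-valued functions supported on faces with k vertices
  (i.e. of dimension k-1; k = 0 is the empty face, degree -1).\<close>
definition ind_chains :: "'a set \<Rightarrow> ('a \<Rightarrow> 'a \<Rightarrow> bool) \<Rightarrow> nat \<Rightarrow> ('a set \<Rightarrow> 'k::field) set" where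
  "ind_chains V E k = {f. \<forall>\<sigma>. f \<sigma> \<noteq> 0 \<longrightarrow> \<sigma> \<in> ind_faces V E \<and> card \<sigma> = k}"

text \<open>Simplicial boundary, vertices ordered by the linear order of 'a:
  the coefficient of sigma - {v} in the boundary of sigma is (-1)^(position of v in sigma).\<close>
definition ind_boundary :: "'a::linorder set \<Rightarrow> ('a set \<Rightarrow> 'k::field) \<Rightarrow> ('a set \<Rightarrow> 'k)" where
  "ind_boundary V f = (\<lambda>\<tau>. \<Sum>v\<in>V - \<tau>. (-1) ^ card {u\<in>\<tau>. u < v} * f (insert v \<tau>))"

abbreviation chain_dim :: "('a set \<Rightarrow> 'k::field) set \<Rightarrow> nat" where
  "chain_dim S \<equiv> vector_space.dim (\<lambda>(c::'k) f. (\<lambda>x. c * f x)) S"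

text \<open>Reduced Betti number in degree k-1: dim ker(d_k) - dim im(d_(k+1)).\<close>
definition red_betti :: "'k::field itself \<Rightarrow> 'a::linorder set \<Rightarrow> ('a \<Rightarrow> 'a \<Rightarrow> bool) \<Rightarrow> nat \<Rightarrow> nat" where
  "red_betti _ V E k =
     chain_dim {f :: 'a set \<Rightarrow> 'k. f \<in> ind_chains V E k \<and> ind_boundary V f = 0}
     - chain_dim (ind_boundary V ` (ind_chains V E (Suc k) :: ('a set \<Rightarrow> 'k) set))"

definition total_red_betti :: "'k::field itself \<Rightarrow> 'a::linorder set \<Rightarrow> ('a \<Rightarrow> 'a \<Rightarrow> bool) \<Rightarrow> nat" where
  "total_red_betti K V E = (\<Sum>k\<in>{0..card V}. red_betti K V E k)"

definition Gamma4 :: real where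
  "Gamma4 = (THE x. 1 \<le> x \<and> x \<le> 2 \<and> x ^ 8 - x ^ 3 - x ^ 2 - x - 1 = 0)"

end

theory Submission
  imports Defs
begin

text \<open>Let \<open>\<beta>(W)\<close> be the number of faces of \<open>Ind(G[W])\<close> minus twice the total rank of its
  boundary maps, i.e.\ its total reduced Betti number. Coning the faces of \<open>Ind(G[W - N[v]])\<close>
  with \<open>v\<close> embeds their boundaries into the part of the boundaries of \<open>Ind(G[W])\<close> on faces
  containing \<open>v\<close>, while the boundaries of \<open>Ind(G[W - v])\<close> vanish there; comparing ranks gives
  \<open>\<beta>(W) \<le> \<beta>(W - v) + \<beta>(W - N[v])\<close>. If \<open>v\<close> is isolated, every face of \<open>G[W - v]\<close> is seen
  in a rank, so \<open>\<beta>(W) \<le> 0\<close>; and \<open>\<beta>(\<emptyset>) = 1\<close>.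

  Branching along the neighbours \<open>u\<^sub>1, \<dots>, u\<^sub>d\<close> of a vertex of minimum degree \<open>d\<close>, the
  \<open>i\<close>-th branch deletes \<open>u\<^sub>1, \<dots>, u\<^sub>i\<close> and the neighbourhood of \<open>u\<^sub>i\<close>, which by
  triangle-freeness are disjoint: at least \<open>i + d\<close> vertices. Induction on \<open>|W|\<close> thus bounds
  \<open>\<beta>(W)\<close> by \<open>\<Gamma>\<^sub>4\<^bsup>|W|\<^esup> \<Sum>\<^sub>i\<^sub>=\<^sub>1\<^sup>d \<Gamma>\<^sub>4\<^bsup>-(i+d)\<^esup>\<close>, which is at most \<open>\<Gamma>\<^sub>4\<^bsup>|W|\<^esup>\<close> for \<open>d \<ge> 4\<close>
  (with equality at \<open>d = 4\<close>, by the equation defining \<open>\<Gamma>\<^sub>4\<close>); minimum degree at most 3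
  needs a finer case analysis.\<close>

section \<open>The constant \<open>\<Gamma>\<^sub>4\<close>\<close>

lemma Gamma4_poly_strict_mono:
  fixes a b :: real
  assumes "1 \<le> a" "a < b"
  shows "a^8 - a^3 - a^2 - a - 1 < b^8 - b^3 - b^2 - b - 1"
proof (rule DERIV_pos_imp_increasing[OF assms(2)])
  fix x :: real assume "a \<le> x"
  hence x: "1 \<le> x" using assms(1) by linarith
  have "x^2 \<le> x^7" using x by (intro power_increasing) auto
  moreover have "x \<le> x^2" using x power_increasing[of 1 2 x] by simp
  moreover have "1 \<le> x^2" using x by (simp add: one_le_power)
  ultimately have "0 < 8 * x^7 - 3 * x^2 - 2 * x - 1" using x by linarith
  moreover have "DERIV (\<lambda>x. x^8 - x^3 - x^2 - x - 1) x :> 8 * x^7 - 3 * x^2 - 2 * x - 1"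
    by (auto intro!: derivative_eq_intros simp: eval_nat_numeral)
  ultimately show "\<exists>y. DERIV (\<lambda>x. x^8 - x^3 - x^2 - x - 1) x :> y \<and> 0 < y" by blast
qed

lemma Gamma4_root:
  "1.243 \<le> Gamma4 \<and> Gamma4 \<le> 1.2435 \<and> Gamma4^8 = Gamma4^3 + Gamma4^2 + Gamma4 + 1"
proof -
  define p where "p = (\<lambda>x::real. x^8 - x^3 - x^2 - x - 1)"
  have "\<exists>x\<ge>1.243. x \<le> 1.2435 \<and> p x = 0"
    by (rule IVT) (auto simp: p_def power_divide intro!: continuous_intros)
  then obtain r where r: "1.243 \<le> r" "r \<le> 1.2435" "p r = 0" by blast
  have uniq: "z = r" if "1 \<le> z" "z \<le> 2" "p z = 0" for z
    using Gamma4_poly_strict_mono[of z r] Gamma4_poly_strict_mono[of r z] that r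
    unfolding p_def by (cases z r rule: linorder_cases) auto
  have "Gamma4 = r" unfolding Gamma4_def
    by (rule the_equality) (use r uniq in \<open>auto simp: p_def\<close>)
  thus ?thesis using r by (simp add: p_def)
qed

lemma Gamma4_ge_1: "1 \<le> Gamma4"
  using Gamma4_root by simp

lemma Gamma4_pos: "0 < Gamma4"
  using Gamma4_root by simp

definition Gamma4_inv :: real where
  "Gamma4_inv = 1 / Gamma4"

lemma Gamma4_inv_bounds: "0.8 \<le> Gamma4_inv \<and> Gamma4_inv \<le> 0.8046"
proof -
  have a: "1.243 \<le> Gamma4" "Gamma4 \<le> 1.2435" using Gamma4_root by auto
  have "1 / Gamma4 \<le> 1 / 1.243" using a by (intro divide_left_mono) auto
  moreover have "1 / 1.2435 \<le> 1 / Gamma4" using a by (intro divide_left_mono) auto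
  ultimately show ?thesis unfolding Gamma4_inv_def by auto
qed

lemma Gamma4_inv_pos: "0 < Gamma4_inv"
  using Gamma4_inv_bounds by simp

lemma Gamma4_inv_le_1: "Gamma4_inv \<le> 1"
  using Gamma4_inv_bounds by simp

lemma Gamma4_inv_equation: "Gamma4_inv^5 + Gamma4_inv^6 + Gamma4_inv^7 + Gamma4_inv^8 = 1"
proof -
  have e: "Gamma4^8 = Gamma4^3 + Gamma4^2 + Gamma4 + 1" using Gamma4_root by simp
  have xy: "Gamma4 * Gamma4_inv = 1" unfolding Gamma4_inv_def using Gamma4_pos by simp
  have "(Gamma4 * Gamma4_inv)^8 = (Gamma4^3 + Gamma4^2 + Gamma4 + 1) * Gamma4_inv^8"
    using e by (simp add: power_mult_distrib)
  also have "\<dots> = (Gamma4 * Gamma4_inv)^3 * Gamma4_inv^5 + (Gamma4 * Gamma4_inv)^2 * Gamma4_inv^6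
      + (Gamma4 * Gamma4_inv) * Gamma4_inv^7 + Gamma4_inv^8"
    by algebra
  finally show ?thesis using xy by simp
qed

lemma Gamma4_pow_le_shift: "a + k \<le> n \<Longrightarrow> Gamma4^a \<le> Gamma4^n * Gamma4_inv^k"
proof -
  assume h: "a + k \<le> n"
  have "Gamma4^n * Gamma4_inv^k = Gamma4^(n - k) * (Gamma4 * Gamma4_inv)^k"
    using h by (simp add: power_mult_distrib power_add[symmetric] mult.assoc)
  also have "\<dots> = Gamma4^(n - k)" using Gamma4_pos by (simp add: Gamma4_inv_def)
  finally show ?thesis using h Gamma4_ge_1 by (simp add: power_increasing)
qed

lemma Gamma4_inv_3_4_le_1: "Gamma4_inv^3 + Gamma4_inv^4 \<le> 1"
proof -
  have "Gamma4_inv^3 + Gamma4_inv^4 \<le> 0.8046^3 + 0.8046^4"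
    using Gamma4_inv_bounds Gamma4_inv_pos by (intro add_mono power_mono) auto
  also have "\<dots> \<le> 1" by (simp add: power_divide)
  finally show ?thesis .
qed

lemma Gamma4_inv_2_le_3_4: "Gamma4_inv^2 \<le> Gamma4_inv^3 + Gamma4_inv^4"
proof -
  have "0.8^2 \<le> Gamma4_inv^2" using Gamma4_inv_bounds by (intro power_mono) auto
  hence "1 \<le> Gamma4_inv + Gamma4_inv^2" using Gamma4_inv_bounds by (simp add: power2_eq_square)
  hence "Gamma4_inv^2 * 1 \<le> Gamma4_inv^2 * (Gamma4_inv + Gamma4_inv^2)"
    using Gamma4_inv_pos by (intro mult_left_mono) auto
  thus ?thesis by (simp add: algebra_simps power_add[symmetric] eval_nat_numeral)
qed

lemma Gamma4_inv_5_5_6_le_1: "2 * Gamma4_inv^5 + Gamma4_inv^6 \<le> 1"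
proof -
  have "2 * Gamma4_inv^5 + Gamma4_inv^6 \<le> 2 * 0.8046^5 + 0.8046^6"
    using Gamma4_inv_bounds Gamma4_inv_pos by (intro add_mono mult_left_mono power_mono) auto
  also have "\<dots> \<le> 1" by (simp add: power_divide)
  finally show ?thesis .
qed

lemma Gamma4_inv_cubic_le_1:
  "(Gamma4_inv^3 + Gamma4_inv^4) * Gamma4_inv^4 + (Gamma4_inv^3 + Gamma4_inv^4) * Gamma4_inv^5
     + Gamma4_inv^6 \<le> 1"
proof -
  have "(Gamma4_inv^3 + Gamma4_inv^4) * Gamma4_inv^4 + (Gamma4_inv^3 + Gamma4_inv^4) * Gamma4_inv^5
      + Gamma4_inv^6 = Gamma4_inv^7 + 2 * Gamma4_inv^8 + Gamma4_inv^9 + Gamma4_inv^6"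
    by (simp add: algebra_simps power_add[symmetric])
  also have "\<dots> \<le> 0.8046^7 + 2 * 0.8046^8 + 0.8046^9 + 0.8046^6"
    using Gamma4_inv_bounds Gamma4_inv_pos by (intro add_mono mult_left_mono power_mono) auto
  also have "\<dots> \<le> 1" by (simp add: power_divide)
  finally show ?thesis .
qed

lemma Gamma4_inv_1_10_le_1: "Gamma4_inv + Gamma4_inv^10 \<le> 1"
proof -
  have "Gamma4_inv + Gamma4_inv^10 \<le> 0.8046 + 0.8046^10"
    using Gamma4_inv_bounds Gamma4_inv_pos by (intro add_mono power_mono) auto
  also have "\<dots> \<le> 1" by (simp add: power_divide)
  finally show ?thesis .
qed

text \<open>The weight of branching at a vertex of minimum degree \<open>d\<close>: its \<open>i\<close>-th neighbour
  removes at least \<open>i + 1 + d\<close> vertices.\<close>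

definition branch_sum :: "nat \<Rightarrow> real" where
  "branch_sum d = (\<Sum>i<d. Gamma4_inv^(i + 1 + d))"

lemma branch_sum_Suc: "branch_sum (Suc d) = Gamma4_inv * (branch_sum d + Gamma4_inv^(2 * d + 1))"
proof -
  have "branch_sum (Suc d) = (\<Sum>i<d. Gamma4_inv * Gamma4_inv^(i + 1 + d)) + Gamma4_inv * Gamma4_inv^(2 * d + 1)"
    unfolding branch_sum_def by (simp add: lessThan_Suc mult_2 power_add power_Suc)
  thus ?thesis unfolding branch_sum_def by (simp add: sum_distrib_left distrib_left)
qed

lemma branch_sum_le_1: "4 \<le> d \<Longrightarrow> branch_sum d \<le> 1"
proof (induction d rule: dec_induct)
  case base
  have "branch_sum 4 = Gamma4_inv^5 + Gamma4_inv^6 + Gamma4_inv^7 + Gamma4_inv^8"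
    unfolding branch_sum_def by (simp add: eval_nat_numeral)
  thus ?case using Gamma4_inv_equation by simp
next
  case (step d)
  have "Gamma4_inv^(2 * d + 1) \<le> Gamma4_inv^9"
    using step Gamma4_inv_pos Gamma4_inv_le_1 by (intro power_decreasing) auto
  hence "Gamma4_inv * (branch_sum d + Gamma4_inv^(2 * d + 1)) \<le> Gamma4_inv * (1 + Gamma4_inv^9)"
    using step Gamma4_inv_pos by (intro mult_left_mono) auto
  also have "\<dots> = Gamma4_inv + Gamma4_inv^10" by (simp add: distrib_left eval_nat_numeral)
  also have "\<dots> \<le> 1" by (rule Gamma4_inv_1_10_le_1)
  finally show ?case using branch_sum_Suc by simp
qed

section \<open>A recursion for functions on the vertex sets of a triangle-free graph\<close>

definition nbr :: "('a \<Rightarrow> 'a \<Rightarrow> bool) \<Rightarrow> 'a set \<Rightarrow> 'a \<Rightarrow> 'a set" where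
  "nbr E W v = {u\<in>W. E v u}"

definition deg :: "('a \<Rightarrow> 'a \<Rightarrow> bool) \<Rightarrow> 'a set \<Rightarrow> 'a \<Rightarrow> nat" where
  "deg E W v = card (nbr E W v)"

definition del_nbhd :: "('a \<Rightarrow> 'a \<Rightarrow> bool) \<Rightarrow> 'a set \<Rightarrow> 'a \<Rightarrow> 'a set" where
  "del_nbhd E W v = W - insert v (Collect (E v))"

locale finite_graph =
  fixes U :: "'a set" and E :: "'a \<Rightarrow> 'a \<Rightarrow> bool"
  assumes simple: "simple_graph U E"
begin

lemma finite_U: "finite U"
  using simple by (simp add: simple_graph_def)

lemma edge_sym: "E x y \<Longrightarrow> E y x"
  using simple by (simp add: simple_graph_def)

lemma edge_irrefl: "\<not> E x x"
  using simple by (simp add: simple_graph_def)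

lemma finite_nbr: "W \<subseteq> U \<Longrightarrow> finite (nbr E W v)"
  using finite_subset[OF _ finite_U, of "nbr E W v"] by (auto simp: nbr_def)

lemma deg_less_remove_nbr:
  assumes "W \<subseteq> U" "X \<subseteq> W" "v \<in> nbr E W u" "v \<notin> X"
  shows "deg E X u < deg E W u"
proof -
  have "nbr E X u \<subset> nbr E W u" using assms(2-4) by (auto simp: nbr_def)
  thus ?thesis unfolding deg_def by (rule psubset_card_mono[OF finite_nbr[OF assms(1)]])
qed

end

locale branching_bound = finite_graph U E for U :: "'a set" and E +
  fixes \<beta> :: "'a set \<Rightarrow> real"
  assumes triangle_free: "triangle_free U E"
    and branch: "\<And>W v. W \<subseteq> U \<Longrightarrow> v \<in> W \<Longrightarrow> \<beta> W \<le> \<beta> (W - {v}) + \<beta> (del_nbhd E W v)"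
    and isolated: "\<And>W v. W \<subseteq> U \<Longrightarrow> v \<in> W \<Longrightarrow> (\<forall>u\<in>W. \<not> E v u) \<Longrightarrow> \<beta> W \<le> 0"
    and empty: "\<beta> {} \<le> 1"
begin

lemma branch_along:
  "distinct us \<Longrightarrow> set us \<subseteq> W \<Longrightarrow> W \<subseteq> U \<Longrightarrow>
   \<beta> W \<le> (\<Sum>i<length us. \<beta> (del_nbhd E (W - set (take i us)) (us!i))) + \<beta> (W - set us)"
proof (induction us arbitrary: W)
  case Nil
  then show ?case by simp
next
  case (Cons u us)
  have IH: "\<beta> (W - {u}) \<le> (\<Sum>i<length us. \<beta> (del_nbhd E (W - {u} - set (take i us)) (us!i)))
      + \<beta> (W - {u} - set us)"
    using Cons by (intro Cons.IH) auto
  have "W - set (take (Suc i) (u#us)) = W - {u} - set (take i us)" for i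
    by auto
  hence "(\<Sum>i<length (u#us). \<beta> (del_nbhd E (W - set (take i (u#us))) ((u#us)!i)))
      = \<beta> (del_nbhd E W u) + (\<Sum>i<length us. \<beta> (del_nbhd E (W - {u} - set (take i us)) (us!i)))"
    by (simp only: sum.lessThan_Suc_shift length_Cons nth_Cons_Suc nth_Cons_0 take_0
        list.set(1) Diff_empty)
  moreover have "W - set (u#us) = W - {u} - set us" by auto
  moreover have "\<beta> W \<le> \<beta> (W - {u}) + \<beta> (del_nbhd E W u)" using Cons by (intro branch) auto
  ultimately show ?case using IH by simp
qed

lemma branch_at_nbrs:
  assumes "v \<in> W" "W \<subseteq> U" "distinct us" "set us = nbr E W v"
  shows "\<beta> W \<le> (\<Sum>i<length us. \<beta> (del_nbhd E (W - set (take i us)) (us!i)))"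
proof -
  have "\<beta> W \<le> (\<Sum>i<length us. \<beta> (del_nbhd E (W - set (take i us)) (us!i))) + \<beta> (W - set us)"
    using assms by (intro branch_along) (auto simp: nbr_def)
  moreover have "\<beta> (W - set us) \<le> 0"
    using assms by (intro isolated[of _ v]) (auto simp: nbr_def edge_irrefl)
  ultimately show ?thesis by simp
qed

text \<open>Triangle-freeness makes the neighbourhood of \<open>us!i\<close> disjoint from the earlier
  neighbours \<open>take i us\<close> of \<open>v\<close>.\<close>

lemma card_del_nbhd_along:
  assumes "v \<in> W" "W \<subseteq> U" "distinct us" "set us = nbr E W v" "i < length us"
  shows "card (del_nbhd E (W - set (take i us)) (us!i)) + (i + 1 + deg E W (us!i)) \<le> card W"
proof -
  define T where "T = set (take i us)"
  define u where "u = us!i"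
  define X where "X = T \<union> {u} \<union> nbr E W u"
  have finW: "finite W" using assms finite_U finite_subset by blast
  have uin: "u \<in> nbr E W v" using assms unfolding u_def by (metis nth_mem)
  have TN: "T \<subseteq> nbr E W v" using assms unfolding T_def by (metis set_take_subset)
  have XW: "X \<subseteq> W" using TN uin unfolding X_def nbr_def by auto
  have eq: "del_nbhd E (W - T) u = W - X" unfolding del_nbhd_def X_def nbr_def by auto
  have uT: "u \<notin> T"
  proof
    assume "u \<in> T"
    then obtain j where "j < i" "us ! j = us ! i"
      unfolding T_def u_def by (auto simp: in_set_conv_nth)
    thus False using assms nth_eq_iff_index_eq[of us j i] by auto
  qed
  have uN: "u \<notin> nbr E W u" by (simp add: nbr_def edge_irrefl)
  have TNu: "T \<inter> nbr E W u = {}"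
  proof (rule ccontr)
    assume "T \<inter> nbr E W u \<noteq> {}"
    then obtain t where t: "t \<in> T" "t \<in> nbr E W u" by blast
    have "E v t" "E v u" "E u t" "t \<in> U" "u \<in> U" "v \<in> U"
      using t TN uin assms by (auto simp: nbr_def)
    thus False using triangle_free unfolding triangle_free_def by blast
  qed
  have cT: "card T = i" unfolding T_def using assms by (simp add: distinct_card)
  have finN: "finite (nbr E W u)" using finW by (simp add: nbr_def)
  have "card X = card (insert u T) + card (nbr E W u)" unfolding X_def
    using TNu uN finN by (subst card_Un_disjoint[symmetric]) (auto simp: T_def)
  hence cX: "card X = card T + 1 + card (nbr E W u)" using uT by (simp add: T_def)
  have "card (W - X) + card X = card W" using XW finW
    by (metis card_Diff_subset card_mono finite_subset le_add_diff_inverse2)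
  thus ?thesis using eq cT cX unfolding deg_def T_def u_def by simp
qed

definition bounded_up_to :: "nat \<Rightarrow> bool" where
  "bounded_up_to n \<longleftrightarrow> (\<forall>W\<subseteq>U. card W < n \<longrightarrow> \<beta> W \<le> Gamma4 ^ card W)"

lemma bounded_up_to_shift:
  assumes "bounded_up_to n" "X \<subseteq> U" "card X + k \<le> n" "0 < k"
  shows "\<beta> X \<le> Gamma4^n * Gamma4_inv^k"
proof -
  have "\<beta> X \<le> Gamma4 ^ card X" using assms unfolding bounded_up_to_def by auto
  also have "\<dots> \<le> Gamma4^n * Gamma4_inv^k" using assms(3) by (rule Gamma4_pow_le_shift)
  finally show ?thesis .
qed

lemma branch_at_nbrs_bound:
  assumes "bounded_up_to (card W)" "v \<in> W" "W \<subseteq> U" "distinct us" "set us = nbr E W v"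
  shows "\<beta> W \<le> (\<Sum>i<length us. Gamma4^card W * Gamma4_inv^(i + 1 + deg E W (us!i)))"
proof -
  have "\<beta> W \<le> (\<Sum>i<length us. \<beta> (del_nbhd E (W - set (take i us)) (us!i)))"
    using assms by (intro branch_at_nbrs)
  also have "\<dots> \<le> (\<Sum>i<length us. Gamma4^card W * Gamma4_inv^(i + 1 + deg E W (us!i)))"
  proof (intro sum_mono bounded_up_to_shift[OF assms(1)])
    fix i assume "i \<in> {..<length us}"
    thus "card (del_nbhd E (W - set (take i us)) (us!i)) + (i + 1 + deg E W (us!i)) \<le> card W"
      using assms by (intro card_del_nbhd_along) auto
    show "del_nbhd E (W - set (take i us)) (us!i) \<subseteq> U"
      using assms(3) unfolding del_nbhd_def by auto
  qed simp
  finally show ?thesis .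
qed

lemma nbr_list:
  assumes "W \<subseteq> U"
  obtains us where "distinct us" "set us = nbr E W v"
proof -
  have "finite (nbr E W v)" using assms by (rule finite_nbr)
  thus ?thesis using that finite_distinct_list by blast
qed

lemma min_deg_vertex:
  assumes "W \<subseteq> U" "W \<noteq> {}"
  obtains v where "v \<in> W" "\<And>w. w \<in> W \<Longrightarrow> deg E W v \<le> deg E W w"
proof -
  have "finite W" using assms finite_U finite_subset by blast
  hence "Min (deg E W ` W) \<in> deg E W ` W" "\<forall>w\<in>W. Min (deg E W ` W) \<le> deg E W w"
    using assms by auto
  thus ?thesis using that by force
qed

lemma min_deg_bound:
  assumes "bounded_up_to (card W)" "v \<in> W" "W \<subseteq> U" "\<And>w. w \<in> W \<Longrightarrow> deg E W v \<le> deg E W w"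
  shows "\<beta> W \<le> Gamma4^card W * branch_sum (deg E W v)"
proof -
  obtain us where us: "distinct us" "set us = nbr E W v" using nbr_list assms(3) by blast
  have len: "length us = deg E W v" using us unfolding deg_def by (metis distinct_card)
  have "\<beta> W \<le> (\<Sum>i<length us. Gamma4^card W * Gamma4_inv^(i + 1 + deg E W (us!i)))"
    using assms us by (intro branch_at_nbrs_bound)
  also have "\<dots> \<le> (\<Sum>i<length us. Gamma4^card W * Gamma4_inv^(i + 1 + deg E W v))"
  proof (intro sum_mono mult_left_mono)
    fix i assume "i \<in> {..<length us}"
    hence "us!i \<in> W" using us by (auto simp: nbr_def dest: nth_mem)
    thus "Gamma4_inv^(i + 1 + deg E W (us!i)) \<le> Gamma4_inv^(i + 1 + deg E W v)"
      using assms Gamma4_inv_pos Gamma4_inv_le_1 by (intro power_decreasing) auto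
  qed (use Gamma4_pos in auto)
  also have "\<dots> = Gamma4^card W * branch_sum (deg E W v)"
    unfolding branch_sum_def len by (simp add: sum_distrib_left)
  finally show ?thesis .
qed

lemma low_deg_bound:
  assumes "bounded_up_to (card W)" "W \<subseteq> U" "u \<in> W" "deg E W u \<le> 2"
  shows "\<beta> W \<le> Gamma4^card W * (Gamma4_inv^3 + Gamma4_inv^4)"
proof -
  obtain v where v: "v \<in> W" "\<And>w. w \<in> W \<Longrightarrow> deg E W v \<le> deg E W w"
    using min_deg_vertex[of W] assms by blast
  have "deg E W v \<le> 2" using v assms by force
  hence "branch_sum (deg E W v) \<le> Gamma4_inv^3 + Gamma4_inv^4"
    using Gamma4_inv_pos Gamma4_inv_2_le_3_4
    by (auto simp: branch_sum_def le_Suc_eq eval_nat_numeral)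
  hence "Gamma4^card W * branch_sum (deg E W v) \<le> Gamma4^card W * (Gamma4_inv^3 + Gamma4_inv^4)"
    using Gamma4_pos by (intro mult_left_mono) auto
  thus ?thesis using min_deg_bound[OF assms(1) v(1) assms(2) v(2)] by linarith
qed

lemma low_deg_bound_shift:
  assumes "bounded_up_to (card W)" "X \<subseteq> U" "card X + k \<le> card W" "u \<in> X" "deg E X u \<le> 2"
  shows "\<beta> X \<le> Gamma4^card W * Gamma4_inv^k * (Gamma4_inv^3 + Gamma4_inv^4)"
proof -
  have "bounded_up_to (card X)" using assms(1,3) unfolding bounded_up_to_def by auto
  hence "\<beta> X \<le> Gamma4^card X * (Gamma4_inv^3 + Gamma4_inv^4)"
    using assms(2,4,5) by (rule low_deg_bound)
  also have "\<dots> \<le> Gamma4^card W * Gamma4_inv^k * (Gamma4_inv^3 + Gamma4_inv^4)"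
    using Gamma4_pow_le_shift[OF assms(3)] Gamma4_inv_pos by (intro mult_right_mono) auto
  finally show ?thesis .
qed

lemma bound_min_deg_ge_4:
  assumes "bounded_up_to (card W)" "v \<in> W" "W \<subseteq> U"
    "\<And>w. w \<in> W \<Longrightarrow> deg E W v \<le> deg E W w" "4 \<le> deg E W v"
  shows "\<beta> W \<le> Gamma4 ^ card W"
proof -
  have "\<beta> W \<le> Gamma4^card W * branch_sum (deg E W v)" using min_deg_bound assms by blast
  also have "\<dots> \<le> Gamma4^card W * 1"
    using branch_sum_le_1[OF assms(5)] Gamma4_pos by (intro mult_left_mono) auto
  finally show ?thesis by simp
qed

lemma bound_cubic_with_high_nbr:
  assumes "bounded_up_to (card W)" "v \<in> W" "W \<subseteq> U"
    "\<And>w. w \<in> W \<Longrightarrow> deg E W v \<le> deg E W w" "deg E W v = 3"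
    "u \<in> nbr E W v" "4 \<le> deg E W u"
  shows "\<beta> W \<le> Gamma4 ^ card W"
proof -
  define N where "N = nbr E W v"
  have finN: "finite N" using assms(5) unfolding N_def deg_def by (metis card.infinite zero_neq_numeral)
  obtain rest where rest: "distinct rest" "set rest = N - {u}"
    using finN finite_distinct_list[of "N - {u}"] by auto
  define us where "us = u # rest"
  have us: "distinct us" "set us = nbr E W v" using rest assms(6) unfolding us_def N_def by auto
  have l: "length us = 3" using us assms(5) unfolding deg_def by (metis distinct_card)
  have "\<beta> W \<le> (\<Sum>i<length us. Gamma4^card W * Gamma4_inv^(i + 1 + deg E W (us!i)))"
    using branch_at_nbrs_bound[OF assms(1-3) us] .
  also have "\<dots> \<le> (\<Sum>i<3. Gamma4^card W * Gamma4_inv^(i + 1 + (if i = 0 then 4 else 3)))"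
  proof -
    have "Gamma4_inv^(i + 1 + deg E W (us!i)) \<le> Gamma4_inv^(i + 1 + (if i = 0 then 4 else 3))"
      if "i < 3" for i
    proof -
      have "us!i \<in> W" using that l us unfolding nbr_def by (metis (no_types, lifting) mem_Collect_eq nth_mem)
      hence "(if i = 0 then 4 else 3) \<le> deg E W (us!i)" using assms(4,5,7) by (auto simp: us_def)
      thus ?thesis using Gamma4_inv_pos Gamma4_inv_le_1 by (intro power_decreasing) auto
    qed
    thus ?thesis unfolding l using Gamma4_pos by (intro sum_mono mult_left_mono) auto
  qed
  also have "\<dots> = Gamma4^card W * (2 * Gamma4_inv^5 + Gamma4_inv^6)"
    by (simp add: eval_nat_numeral algebra_simps)
  also have "\<dots> \<le> Gamma4^card W * 1"
    using Gamma4_inv_5_5_6_le_1 Gamma4_pos by (intro mult_left_mono) auto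
  finally show ?thesis by simp
qed

lemma branch_at_three_nbrs:
  assumes "v \<in> W" "W \<subseteq> U" "deg E W v = 3" "\<And>u. u \<in> nbr E W v \<Longrightarrow> deg E W u = 3"
  obtains u0 u1 u2 where "nbr E W v = {u0, u1, u2}" "distinct [u0, u1, u2]"
    "\<beta> W \<le> \<beta> (del_nbhd E W u0) + \<beta> (del_nbhd E (W - {u0}) u1) + \<beta> (del_nbhd E (W - {u0, u1}) u2)"
    "card (del_nbhd E W u0) + 4 \<le> card W" "card (del_nbhd E (W - {u0}) u1) + 5 \<le> card W"
    "card (del_nbhd E (W - {u0, u1}) u2) + 6 \<le> card W"
proof -
  obtain us where us: "distinct us" "set us = nbr E W v" using nbr_list assms(2) by blast
  have l: "length us = 3" using us assms(3) unfolding deg_def by (metis distinct_card)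
  define u0 u1 u2 where "u0 = us!0" "u1 = us!1" "u2 = us!2"
  have us_eq: "us = [u0, u1, u2]" unfolding u0_u1_u2_def
    by (rule nth_equalityI) (auto simp: l numeral_3_eq_3 numeral_2_eq_2 less_Suc_eq)
  have "\<beta> W \<le> (\<Sum>i<length us. \<beta> (del_nbhd E (W - set (take i us)) (us!i)))"
    using branch_at_nbrs[OF assms(1,2) us] .
  also have "\<dots> = \<beta> (del_nbhd E W u0) + \<beta> (del_nbhd E (W - {u0}) u1) + \<beta> (del_nbhd E (W - {u0, u1}) u2)"
    using us_eq by (simp add: numeral_3_eq_3 insert_commute)
  finally have split3: "\<beta> W \<le> \<beta> (del_nbhd E W u0) + \<beta> (del_nbhd E (W - {u0}) u1)
      + \<beta> (del_nbhd E (W - {u0, u1}) u2)" .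
  have N: "nbr E W v = {u0, u1, u2}" using us us_eq by simp
  moreover have "deg E W u0 = 3" "deg E W u1 = 3" "deg E W u2 = 3" using assms(4) N by auto
  ultimately show ?thesis
    using that[of u0 u1 u2] split3 us us_eq l card_del_nbhd_along[OF assms(1,2) us, of 0]
      card_del_nbhd_along[OF assms(1,2) us, of 1] card_del_nbhd_along[OF assms(1,2) us, of 2]
    by (auto simp: numeral_2_eq_2 insert_commute)
qed

text \<open>When \<open>v\<close> and its neighbours \<open>u\<^sub>0, u\<^sub>1, u\<^sub>2\<close> all have degree 3, the first two branches
  leave \<open>u\<^sub>1\<close> resp. \<open>u\<^sub>2\<close> with degree at most 2 (they lose \<open>v\<close>), so one more branching
  step with the low-degree bound beats the plain estimate.\<close>

lemma bound_cubic_nbrs_cubic: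
  assumes "bounded_up_to (card W)" "v \<in> W" "W \<subseteq> U"
    "deg E W v = 3" "\<And>u. u \<in> nbr E W v \<Longrightarrow> deg E W u = 3"
  shows "\<beta> W \<le> Gamma4 ^ card W"
proof -
  obtain u0 u1 u2 where N: "nbr E W v = {u0, u1, u2}" and dist: "distinct [u0, u1, u2]"
    and split3: "\<beta> W \<le> \<beta> (del_nbhd E W u0) + \<beta> (del_nbhd E (W - {u0}) u1) + \<beta> (del_nbhd E (W - {u0, u1}) u2)"
    and card_W: "card (del_nbhd E W u0) + 4 \<le> card W" "card (del_nbhd E (W - {u0}) u1) + 5 \<le> card W"
      "card (del_nbhd E (W - {u0, u1}) u2) + 6 \<le> card W"
    using branch_at_three_nbrs[OF assms(2-5)] by blast
  have Ev: "E v u0" "E v u1" "E v u2" "u1 \<in> W" "u2 \<in> W" using N unfolding nbr_def by blast+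
  have noE: "\<not> E a b" if "a \<in> nbr E W v" "b \<in> nbr E W v" for a b
    using that triangle_free assms(2,3) unfolding nbr_def triangle_free_def by blast
  have low_deg: "deg E X u \<le> 2" if "u \<in> nbr E W v" "X \<subseteq> W" "v \<notin> X" for X u
  proof -
    have "v \<in> nbr E W u" using that(1) assms(2) edge_sym unfolding nbr_def by auto
    thus ?thesis using deg_less_remove_nbr[OF assms(3) that(2)] that assms(5) by force
  qed
  have sub: "del_nbhd E W u0 \<subseteq> U" "del_nbhd E (W - {u0}) u1 \<subseteq> U" "del_nbhd E (W - {u0, u1}) u2 \<subseteq> U"
    using assms(3) unfolding del_nbhd_def by auto
  have "\<beta> (del_nbhd E W u0) \<le> Gamma4^card W * Gamma4_inv^4 * (Gamma4_inv^3 + Gamma4_inv^4)"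
  proof (rule low_deg_bound_shift[OF assms(1) sub(1) card_W(1)])
    show "u1 \<in> del_nbhd E W u0" using Ev dist noE[of u0 u1] N unfolding del_nbhd_def by auto
    show "deg E (del_nbhd E W u0) u1 \<le> 2" using low_deg[of u1] N Ev edge_sym unfolding del_nbhd_def by auto
  qed
  moreover have "\<beta> (del_nbhd E (W - {u0}) u1) \<le> Gamma4^card W * Gamma4_inv^5 * (Gamma4_inv^3 + Gamma4_inv^4)"
  proof (rule low_deg_bound_shift[OF assms(1) sub(2) card_W(2)])
    show "u2 \<in> del_nbhd E (W - {u0}) u1" using Ev dist noE[of u1 u2] N unfolding del_nbhd_def by auto
    show "deg E (del_nbhd E (W - {u0}) u1) u2 \<le> 2"
      using low_deg[of u2 "del_nbhd E (W - {u0}) u1"] N Ev edge_sym[of v u1] unfolding del_nbhd_def by auto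
  qed
  moreover have "\<beta> (del_nbhd E (W - {u0, u1}) u2) \<le> Gamma4^card W * Gamma4_inv^6"
    using bounded_up_to_shift[OF assms(1) sub(3) card_W(3)] by simp
  ultimately have "\<beta> W \<le> Gamma4^card W * ((Gamma4_inv^3 + Gamma4_inv^4) * Gamma4_inv^4
      + (Gamma4_inv^3 + Gamma4_inv^4) * Gamma4_inv^5 + Gamma4_inv^6)"
    using split3 by (simp add: algebra_simps)
  also have "\<dots> \<le> Gamma4^card W * 1"
    using Gamma4_inv_cubic_le_1 Gamma4_pos by (intro mult_left_mono) auto
  finally show ?thesis by simp
qed

lemma bound_step:
  assumes "bounded_up_to (card W)" "W \<subseteq> U"
  shows "\<beta> W \<le> Gamma4 ^ card W"
proof (cases "W = {}")
  case True
  thus ?thesis using empty by simp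
next
  case False
  then obtain v where v: "v \<in> W" "\<And>w. w \<in> W \<Longrightarrow> deg E W v \<le> deg E W w"
    using min_deg_vertex[OF assms(2)] by blast
  consider "deg E W v \<le> 2" | "4 \<le> deg E W v" | "deg E W v = 3" by linarith
  thus ?thesis
  proof cases
    case 1
    have "\<beta> W \<le> Gamma4^card W * (Gamma4_inv^3 + Gamma4_inv^4)" using low_deg_bound assms v 1 by blast
    also have "\<dots> \<le> Gamma4^card W * 1"
      using Gamma4_inv_3_4_le_1 Gamma4_pos by (intro mult_left_mono) auto
    finally show ?thesis by simp
  next
    case 2
    thus ?thesis using bound_min_deg_ge_4 assms v by blast
  next
    case 3
    show ?thesis
    proof (cases "\<exists>u\<in>nbr E W v. 4 \<le> deg E W u")
      case True
      thus ?thesis using bound_cubic_with_high_nbr assms v 3 by blast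
    next
      case False
      have "deg E W u = 3" if "u \<in> nbr E W v" for u
        using v(2)[of u] that False 3 unfolding nbr_def by force
      thus ?thesis using bound_cubic_nbrs_cubic assms v 3 by blast
    qed
  qed
qed

theorem bounded_by_Gamma4_pow: "W \<subseteq> U \<Longrightarrow> \<beta> W \<le> Gamma4 ^ card W"
proof (induction "card W" arbitrary: W rule: less_induct)
  case less
  hence "bounded_up_to (card W)" unfolding bounded_up_to_def by auto
  thus ?case using bound_step less by blast
qed

end

section \<open>Dimensions of spaces of functions into a field\<close>

abbreviation (input) fscale :: "'k::field \<Rightarrow> ('b \<Rightarrow> 'k) \<Rightarrow> ('b \<Rightarrow> 'k)" where
  "fscale \<equiv> (\<lambda>c f x. c * f x)"

interpretation VS: vector_space "fscale :: 'k::field \<Rightarrow> ('b \<Rightarrow> 'k) \<Rightarrow> ('b \<Rightarrow> 'k)"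
  by unfold_locales (auto simp: algebra_simps fun_eq_iff)

lemma module_hom_funI:
  "(\<And>f g. L (f + g) = L f + L g) \<Longrightarrow> (\<And>c f. L (fscale c f) = fscale c (L f)) \<Longrightarrow>
   module_hom (fscale :: 'k::field \<Rightarrow> ('b \<Rightarrow> 'k) \<Rightarrow> ('b \<Rightarrow> 'k)) (fscale :: 'k \<Rightarrow> ('c \<Rightarrow> 'k) \<Rightarrow> ('c \<Rightarrow> 'k)) L"
  by (auto simp: module_hom_def module_hom_axioms_def VS.module_axioms)

text \<open>\<open>VS.dim\<close> is the cardinality of a basis, hence \<open>0\<close> for infinite-dimensional spaces;
  the dimension estimates below therefore assume that everything lies in the span of a
  finite set \<open>F\<close>.\<close>

lemma dim_mono_in_span:
  fixes S T :: "('b \<Rightarrow> 'k::field) set"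
  assumes "finite F" "T \<subseteq> VS.span F" "S \<subseteq> T"
  shows "VS.dim S \<le> VS.dim T"
proof -
  obtain B where B: "B \<subseteq> S" "VS.independent B" "S \<subseteq> VS.span B" "card B = VS.dim S"
    using VS.basis_exists by blast
  obtain B' where B': "B \<subseteq> B'" "B' \<subseteq> T" "VS.independent B'" "T \<subseteq> VS.span B'"
    using VS.maximal_independent_subset_extend[of B T] B assms(3) by blast
  have fin: "finite B'" using VS.independent_span_bound[OF assms(1) B'(3)] B'(2) assms(2) by blast
  have "VS.dim T = card B'" using VS.basis_card_eq_dim[OF B'(2) B'(4) B'(3)] by simp
  thus ?thesis using B B' fin card_mono by metis
qed

lemma dim_kernel_add_dim_image_le:
  fixes S :: "('b \<Rightarrow> 'k::field) set" and L :: "('b \<Rightarrow> 'k) \<Rightarrow> ('c \<Rightarrow> 'k)"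
  assumes "finite F" "S \<subseteq> VS.span F" "module_hom fscale fscale L"
  shows "VS.dim {x\<in>S. L x = 0} + VS.dim (L ` S) \<le> VS.dim S"
proof -
  obtain K where K: "K \<subseteq> {x\<in>S. L x = 0}" "VS.independent K" "{x\<in>S. L x = 0} \<subseteq> VS.span K"
     "card K = VS.dim {x\<in>S. L x = 0}"
    using VS.basis_exists by blast
  obtain B where B: "K \<subseteq> B" "B \<subseteq> S" "VS.independent B" "S \<subseteq> VS.span B"
    using VS.maximal_independent_subset_extend[of K S] K by blast
  have fin: "finite B" using VS.independent_span_bound[OF assms(1) B(3)] B(2) assms(2) by blast
  have dS: "VS.dim S = card B" using VS.basis_card_eq_dim[OF B(2) B(4) B(3)] by simp
  have "L ` S \<subseteq> L ` VS.span B" using B(4) by auto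
  also have "\<dots> = VS.span (L ` B)" using module_hom.span_image[OF assms(3)] by metis
  also have "\<dots> \<subseteq> VS.span (L ` (B - K))"
  proof -
    have "L ` B \<subseteq> insert 0 (L ` (B - K))" using K by auto
    hence "VS.span (L ` B) \<subseteq> VS.span (insert 0 (L ` (B - K)))" by (rule VS.span_mono)
    thus ?thesis by simp
  qed
  finally have "VS.dim (L ` S) \<le> card (L ` (B - K))"
    using fin by (intro VS.dim_le_card) auto
  also have "\<dots> \<le> card (B - K)" using fin by (intro card_image_le) auto
  also have "\<dots> = card B - card K" using fin B(1) by (simp add: card_Diff_subset finite_subset)
  finally show ?thesis using K(4) dS fin B(1) card_mono by (metis add_le_imp_le_diff add.commute le_diff_conv2)
qed

lemma dim_image_le:
  fixes S :: "('b \<Rightarrow> 'k::field) set" and L :: "('b \<Rightarrow> 'k) \<Rightarrow> ('c \<Rightarrow> 'k)"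
  assumes "finite F" "S \<subseteq> VS.span F" "module_hom fscale fscale L"
  shows "VS.dim (L ` S) \<le> VS.dim S"
  using dim_kernel_add_dim_image_le[OF assms] by simp

lemma dim_le_dim_inj_image:
  fixes S :: "('b \<Rightarrow> 'k::field) set" and L :: "('b \<Rightarrow> 'k) \<Rightarrow> ('c \<Rightarrow> 'k)"
  assumes "finite F" "L ` S \<subseteq> VS.span F" "module_hom fscale fscale L" "inj_on L (VS.span S)"
  shows "VS.dim S \<le> VS.dim (L ` S)"
proof -
  obtain B where B: "B \<subseteq> S" "VS.independent B" "S \<subseteq> VS.span B" "card B = VS.dim S"
    using VS.basis_exists by blast
  have injB: "inj_on L (VS.span B)"
    using assms(4) VS.span_mono[OF B(1)] inj_on_subset by blast
  have indep: "VS.independent (L ` B)"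
    using module_hom.independent_injective_image[OF assms(3) B(2) injB] .
  have sub: "L ` B \<subseteq> L ` S" using B by auto
  have "card B = card (L ` B)" using card_image injB VS.span_superset inj_on_subset by metis
  also have "\<dots> = VS.dim (L ` B)" using VS.dim_eq_card_independent[OF indep] by simp
  also have "\<dots> \<le> VS.dim (L ` S)" using dim_mono_in_span[OF assms(1) assms(2) sub] .
  finally show ?thesis using B(4) by simp
qed

lemma dim_subset_zero:
  assumes "S \<subseteq> {0}"
  shows "VS.dim (S :: ('b \<Rightarrow> 'k::field) set) = 0"
proof -
  obtain B where B: "B \<subseteq> S" "VS.independent B" "S \<subseteq> VS.span B" "card B = VS.dim S"
    using VS.basis_exists by blast
  have "0 \<notin> B" using B(2) VS.dependent_zero by metis
  hence "B = {}" using B(1) assms by auto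
  thus ?thesis using B(4) by simp
qed

lemma sum_fun_apply: "(\<Sum>i\<in>A. g i) x = (\<Sum>i\<in>A. g i x)"
  by (induction A rule: infinite_finite_induct) auto

definition unit_fun :: "'b \<Rightarrow> ('b \<Rightarrow> 'k::field)" where
  "unit_fun \<sigma> = (\<lambda>\<tau>. if \<tau> = \<sigma> then 1 else 0)"

lemma unit_fun_inj: "inj (unit_fun :: 'b \<Rightarrow> ('b \<Rightarrow> 'k::field))"
  by (rule injI) (metis unit_fun_def one_neq_zero)

lemma unit_fun_expansion:
  assumes "finite A" "\<And>\<sigma>. f \<sigma> \<noteq> 0 \<Longrightarrow> \<sigma> \<in> A"
  shows "f = (\<Sum>\<sigma>\<in>A. fscale (f \<sigma>) (unit_fun \<sigma> :: 'b \<Rightarrow> 'k::field))"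
proof
  fix \<tau>
  have "(\<Sum>\<sigma>\<in>A. fscale (f \<sigma>) (unit_fun \<sigma> :: 'b \<Rightarrow> 'k)) \<tau> = (\<Sum>\<sigma>\<in>A. f \<sigma> * (if \<tau> = \<sigma> then 1 else 0))"
    by (simp add: sum_fun_apply unit_fun_def)
  also have "\<dots> = (\<Sum>\<sigma>\<in>A. if \<tau> = \<sigma> then f \<tau> else 0)"
    by (rule sum.cong) auto
  also have "\<dots> = f \<tau>" using assms by (auto simp: sum.delta)
  finally show "f \<tau> = (\<Sum>\<sigma>\<in>A. fscale (f \<sigma>) (unit_fun \<sigma> :: 'b \<Rightarrow> 'k)) \<tau>" by simp
qed

lemma in_span_unit_funs:
  assumes "finite A" "\<And>\<sigma>. f \<sigma> \<noteq> 0 \<Longrightarrow> \<sigma> \<in> A"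
  shows "f \<in> VS.span (unit_fun ` A :: ('b \<Rightarrow> 'k::field) set)"
proof -
  have "(\<Sum>\<sigma>\<in>A. fscale (f \<sigma>) (unit_fun \<sigma> :: 'b \<Rightarrow> 'k)) \<in> VS.span (unit_fun ` A)"
    by (intro VS.span_sum VS.span_scale VS.span_base) auto
  thus ?thesis using unit_fun_expansion[of A f, OF assms] by simp
qed

lemma unit_funs_independent: "VS.independent (unit_fun ` A :: ('b \<Rightarrow> 'k::field) set)"
  unfolding VS.independent_explicit_module
proof (intro allI impI)
  fix t u v
  assume h: "finite t" "t \<subseteq> unit_fun ` A" "(\<Sum>v\<in>t. fscale (u v) v) = (0 :: 'b \<Rightarrow> 'k)" "v \<in> t"
  then obtain \<sigma> where \<sigma>: "v = unit_fun \<sigma>" by blast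
  have "0 = (\<Sum>w\<in>t. fscale (u w) w) \<sigma>" using h by simp
  also have "\<dots> = u v * v \<sigma> + (\<Sum>w\<in>t - {v}. u w * w \<sigma>)"
    using sum.remove[OF h(1) h(4)] by (simp add: sum_fun_apply)
  also have "(\<Sum>w\<in>t - {v}. u w * w \<sigma>) = 0"
  proof (rule sum.neutral, rule ballI)
    fix w assume "w \<in> t - {v}"
    then obtain \<rho> where "w = unit_fun \<rho>" "\<rho> \<noteq> \<sigma>" using h(2) \<sigma> by auto
    thus "u w * w \<sigma> = 0" by (simp add: unit_fun_def)
  qed
  finally show "u v = 0" using \<sigma> by (simp add: unit_fun_def)
qed

lemma dim_eq_card_unit_funs:
  "finite A \<Longrightarrow> S \<subseteq> VS.span (unit_fun ` A) \<Longrightarrow> unit_fun ` A \<subseteq> S \<Longrightarrow>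
   VS.dim (S :: ('b \<Rightarrow> 'k::field) set) = card A"
  using VS.basis_card_eq_dim[of "unit_fun ` A" S] unit_funs_independent[of A]
    card_image[OF inj_on_subset[OF unit_fun_inj]]
  by (metis subset_UNIV)

section \<open>Chains of the independence complex\<close>

definition supported_on :: "'a set \<Rightarrow> ('a set \<Rightarrow> 'k::field) set" where
  "supported_on U = {f. \<forall>\<sigma>. f \<sigma> \<noteq> 0 \<longrightarrow> \<sigma> \<subseteq> U}"

definition faces_card :: "'a set \<Rightarrow> ('a \<Rightarrow> 'a \<Rightarrow> bool) \<Rightarrow> nat \<Rightarrow> 'a set set" where
  "faces_card W E k = {\<sigma> \<in> ind_faces W E. card \<sigma> = k}"

lemma supported_on_in_span:
  assumes "finite U" "f \<in> supported_on U"
  shows "f \<in> VS.span (unit_fun ` Pow U :: ('a set \<Rightarrow> 'k::field) set)"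
  using assms by (intro in_span_unit_funs) (auto simp: supported_on_def)

lemma card_filter_insert:
  "finite \<rho> \<Longrightarrow> v \<notin> \<rho> \<Longrightarrow>
   card {u\<in>insert v \<rho>. P u} = (if P v then Suc (card {u\<in>\<rho>. P u}) else card {u\<in>\<rho>. P u})"
proof -
  assume "finite \<rho>" "v \<notin> \<rho>"
  moreover have "{u\<in>insert v \<rho>. P u} = (if P v then insert v {u\<in>\<rho>. P u} else {u\<in>\<rho>. P u})"
    by auto
  ultimately show ?thesis by simp
qed

lemma sum_pairs_antisym_eq_0:
  fixes g :: "'a::linorder \<Rightarrow> 'a \<Rightarrow> 'b::ab_group_add"
  assumes "finite A" "\<And>v w. v \<in> A \<Longrightarrow> w \<in> A \<Longrightarrow> v < w \<Longrightarrow> g v w + g w v = 0"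
  shows "(\<Sum>v\<in>A. \<Sum>w\<in>A - {v}. g v w) = 0"
proof -
  define P where "P = {(v, w). v \<in> A \<and> w \<in> A \<and> v < w}"
  have finP: "finite P" using assms(1) by (intro finite_subset[of P "A \<times> A"]) (auto simp: P_def)
  have "Sigma A (\<lambda>v. A - {v}) = P \<union> prod.swap ` P" by (auto simp: P_def neq_iff image_iff)
  moreover have "P \<inter> prod.swap ` P = {}" by (auto simp: P_def)
  ultimately have "(\<Sum>v\<in>A. \<Sum>w\<in>A - {v}. g v w) = (\<Sum>(v, w)\<in>P. g v w) + (\<Sum>(v, w)\<in>prod.swap ` P. g v w)"
    using assms(1) finP by (simp add: sum.Sigma sum.union_disjoint)
  also have "\<dots> = (\<Sum>(v, w)\<in>P. g v w + g w v)"
    by (simp add: sum.reindex sum.distrib case_prod_beta)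
  also have "\<dots> = 0" using assms(2) by (intro sum.neutral) (auto simp: P_def)
  finally show ?thesis .
qed

context finite_graph
begin

lemma ind_faces_subset: "\<sigma> \<in> ind_faces W E \<Longrightarrow> \<sigma> \<subseteq> W"
  by (simp add: ind_faces_def)

lemma ind_faces_finite: "W \<subseteq> U \<Longrightarrow> \<sigma> \<in> ind_faces W E \<Longrightarrow> finite \<sigma>"
  using finite_U by (meson ind_faces_subset finite_subset subset_trans)

lemma insert_in_ind_faces:
  assumes "v \<in> W" "\<rho> \<in> ind_faces (del_nbhd E W v) E"
  shows "insert v \<rho> \<in> ind_faces W E"
  using assms edge_sym edge_irrefl by (auto simp: ind_faces_def del_nbhd_def)

lemma remove_from_ind_faces:
  assumes "\<sigma> \<in> ind_faces W E" "v \<in> \<sigma>"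
  shows "\<sigma> - {v} \<in> ind_faces (del_nbhd E W v) E"
  using assms by (auto simp: ind_faces_def del_nbhd_def)

end

text \<open>\<open>join v g\<close> is the cone \<open>v * g\<close>: the face \<open>\<sigma>\<close> of \<open>g\<close> becomes \<open>\<sigma> \<union> {v}\<close>, signed by the
  position of \<open>v\<close> in it. On faces containing \<open>v\<close> its boundary is the cone over the
  boundary of \<open>g\<close>; on faces avoiding \<open>v\<close> it is \<open>twist v g\<close>, a signed copy of \<open>g\<close>.\<close>

definition sign_above :: "'a::linorder \<Rightarrow> 'a set \<Rightarrow> 'k::field" where
  "sign_above v \<rho> = (-1)^card {u\<in>\<rho>. v < u}"

definition join :: "'a::linorder \<Rightarrow> ('a set \<Rightarrow> 'k::field) \<Rightarrow> ('a set \<Rightarrow> 'k)" where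
  "join v g = (\<lambda>\<sigma>. if v \<in> \<sigma> then sign_above v (\<sigma> - {v}) * g (\<sigma> - {v}) else 0)"

definition twist :: "'a::linorder \<Rightarrow> ('a set \<Rightarrow> 'k::field) \<Rightarrow> ('a set \<Rightarrow> 'k)" where
  "twist v g = (\<lambda>\<rho>. if v \<notin> \<rho> then (-1)^card {u\<in>\<rho>. u < v} * sign_above v \<rho> * g \<rho> else 0)"

definition restrict_with :: "'a \<Rightarrow> ('a set \<Rightarrow> 'k::field) \<Rightarrow> ('a set \<Rightarrow> 'k)" where
  "restrict_with v h = (\<lambda>\<sigma>. if v \<in> \<sigma> then h \<sigma> else 0)"

definition restrict_without :: "'a \<Rightarrow> ('a set \<Rightarrow> 'k::field) \<Rightarrow> ('a set \<Rightarrow> 'k)" where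
  "restrict_without v h = (\<lambda>\<sigma>. if v \<notin> \<sigma> then h \<sigma> else 0)"

definition avoiding :: "'a \<Rightarrow> ('a set \<Rightarrow> 'k::field) set" where
  "avoiding v = {h. \<forall>\<sigma>. v \<in> \<sigma> \<longrightarrow> h \<sigma> = 0}"

lemma sign_above_nonzero: "sign_above v \<rho> \<noteq> 0"
  by (simp add: sign_above_def)

lemma sign_join_commute:
  assumes "finite \<rho>" "v \<notin> \<rho>" "w \<notin> \<rho>"
  shows "(-1) ^ card {u \<in> insert v \<rho>. u < w} * sign_above v (insert w \<rho>)
       = sign_above v \<rho> * ((-1) ^ card {u \<in> \<rho>. u < w} :: 'k::field)"
  using card_filter_insert[OF assms(1,2), of "\<lambda>u. u < w"] card_filter_insert[OF assms(1,3), of "\<lambda>u. v < u"]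
  by (cases "v < w") (simp_all add: sign_above_def)

lemma join_hom: "module_hom fscale fscale (join v :: ('a::linorder set \<Rightarrow> 'k::field) \<Rightarrow> _)"
  by (rule module_hom_funI) (auto simp: join_def fun_eq_iff algebra_simps)

lemma twist_hom: "module_hom fscale fscale (twist v :: ('a::linorder set \<Rightarrow> 'k::field) \<Rightarrow> _)"
  by (rule module_hom_funI) (auto simp: twist_def fun_eq_iff algebra_simps)

lemma restrict_with_hom: "module_hom fscale fscale (restrict_with v :: ('a set \<Rightarrow> 'k::field) \<Rightarrow> _)"
  by (rule module_hom_funI) (auto simp: restrict_with_def fun_eq_iff)

lemma restrict_without_hom: "module_hom fscale fscale (restrict_without v :: ('a set \<Rightarrow> 'k::field) \<Rightarrow> _)"
  by (rule module_hom_funI) (auto simp: restrict_without_def fun_eq_iff)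

lemma avoiding_subspace: "VS.subspace (avoiding v)"
  unfolding VS.subspace_def avoiding_def by auto

lemma restrict_with_avoiding: "h \<in> avoiding v \<Longrightarrow> restrict_with v h = 0"
  by (auto simp: avoiding_def restrict_with_def fun_eq_iff)

lemma join_inj: "inj_on (join v :: ('a::linorder set \<Rightarrow> 'k::field) \<Rightarrow> _) (avoiding v)"
proof (rule inj_onI)
  fix g h :: "'a set \<Rightarrow> 'k"
  assume gh: "g \<in> avoiding v" "h \<in> avoiding v" "join v g = join v h"
  show "g = h"
  proof
    fix \<rho>
    show "g \<rho> = h \<rho>"
    proof (cases "v \<in> \<rho>")
      case True
      thus ?thesis using gh by (simp add: avoiding_def)
    next
      case False
      have "join v g (insert v \<rho>) = join v h (insert v \<rho>)" using gh by simp
      moreover have "insert v \<rho> - {v} = \<rho>" using False by auto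
      ultimately show ?thesis by (simp add: join_def sign_above_nonzero)
    qed
  qed
qed

lemma twist_inj: "inj_on (twist v :: ('a::linorder set \<Rightarrow> 'k::field) \<Rightarrow> _) (avoiding v)"
proof (rule inj_onI)
  fix g h :: "'a set \<Rightarrow> 'k"
  assume gh: "g \<in> avoiding v" "h \<in> avoiding v" "twist v g = twist v h"
  show "g = h"
  proof
    fix \<rho>
    show "g \<rho> = h \<rho>"
    proof (cases "v \<in> \<rho>")
      case True
      thus ?thesis using gh by (simp add: avoiding_def)
    next
      case False
      have "twist v g \<rho> = twist v h \<rho>" using gh by simp
      thus ?thesis using False by (simp add: twist_def sign_above_nonzero)
    qed
  qed
qed

lemma join_supported: "v \<in> U \<Longrightarrow> g \<in> supported_on U \<Longrightarrow> join v g \<in> supported_on U"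
  unfolding supported_on_def join_def by (auto split: if_splits)

lemma twist_supported: "g \<in> supported_on U \<Longrightarrow> twist v g \<in> supported_on U"
  unfolding supported_on_def twist_def by (auto split: if_splits)

lemma restrict_with_supported: "h \<in> supported_on U \<Longrightarrow> restrict_with v h \<in> supported_on U"
  unfolding supported_on_def restrict_with_def by (auto split: if_splits)

lemma restrict_without_supported: "h \<in> supported_on U \<Longrightarrow> restrict_without v h \<in> supported_on U"
  unfolding supported_on_def restrict_without_def by (auto split: if_splits)

locale ordered_graph = finite_graph U E for U :: "'a::linorder set" and E
begin

abbreviation ch :: "nat \<Rightarrow> 'a set \<Rightarrow> ('a set \<Rightarrow> 'k::field) set" where
  "ch k W \<equiv> ind_chains W E k"

abbreviation bd :: "('a set \<Rightarrow> 'k::field) \<Rightarrow> ('a set \<Rightarrow> 'k)" where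
  "bd \<equiv> ind_boundary U"

lemma finite_unit_funs: "finite (unit_fun ` Pow U)"
  using finite_U by simp

lemma supported_in_span: "X \<subseteq> supported_on U \<Longrightarrow> X \<subseteq> VS.span (unit_fun ` Pow U)"
  using supported_on_in_span[OF finite_U] by blast

lemma image_supported:
  "X \<subseteq> supported_on U \<Longrightarrow> (\<And>x. x \<in> supported_on U \<Longrightarrow> f x \<in> supported_on U) \<Longrightarrow>
   f ` X \<subseteq> supported_on U"
  by blast

lemma chains_supported: "W \<subseteq> U \<Longrightarrow> ch k W \<subseteq> supported_on U"
  by (fastforce simp: ind_chains_def supported_on_def ind_faces_def)

lemma chains_mono: "W \<subseteq> W' \<Longrightarrow> ch k W \<subseteq> ch k W'"
  by (fastforce simp: ind_chains_def ind_faces_def)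

lemma chains_subspace: "VS.subspace (ch k W)"
  unfolding VS.subspace_def ind_chains_def by (auto; metis add.left_neutral add.right_neutral)

lemma chains_avoiding: "v \<notin> W \<Longrightarrow> ch k W \<subseteq> avoiding v"
  unfolding avoiding_def ind_chains_def ind_faces_def by auto

lemma dim_chains:
  assumes "W \<subseteq> U"
  shows "VS.dim (ch k W :: ('a set \<Rightarrow> 'k::field) set) = card (faces_card W E k)"
proof -
  have fin: "finite (faces_card W E k)"
  proof (rule finite_subset[of _ "Pow U"])
    show "faces_card W E k \<subseteq> Pow U" using assms by (auto simp: faces_card_def ind_faces_def)
  qed (simp add: finite_U)
  have "(ch k W :: ('a set \<Rightarrow> 'k) set) \<subseteq> VS.span (unit_fun ` faces_card W E k)"
  proof
    fix f :: "'a set \<Rightarrow> 'k" assume "f \<in> ch k W"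
    thus "f \<in> VS.span (unit_fun ` faces_card W E k)"
      by (intro in_span_unit_funs[OF fin]) (auto simp: ind_chains_def faces_card_def)
  qed
  moreover have "unit_fun ` faces_card W E k \<subseteq> (ch k W :: ('a set \<Rightarrow> 'k) set)"
    by (auto simp: ind_chains_def faces_card_def unit_fun_def split: if_splits)
  ultimately show ?thesis by (rule dim_eq_card_unit_funs[OF fin])
qed

lemma chains_card_gt:
  assumes "W \<subseteq> U" "card U < k"
  shows "ch k W \<subseteq> {0}"
proof
  fix f assume f: "f \<in> ch k W"
  have "f \<sigma> = 0" for \<sigma>
  proof (rule ccontr)
    assume "f \<sigma> \<noteq> 0"
    hence "\<sigma> \<subseteq> U" "card \<sigma> = k" using f assms(1) unfolding ind_chains_def ind_faces_def by blast+
    hence "k \<le> card U" using card_mono[OF finite_U] by blast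
    thus False using assms(2) by linarith
  qed
  thus "f \<in> {0}" by auto
qed

lemma boundary_hom: "module_hom fscale fscale (bd :: ('a set \<Rightarrow> 'k::field) \<Rightarrow> _)"
  by (rule module_hom_funI)
    (simp_all add: ind_boundary_def fun_eq_iff sum.distrib sum_distrib_left distrib_left mult.left_commute)

lemma boundary_nonzero:
  assumes "bd f \<tau> \<noteq> 0"
  obtains w where "w \<in> U - \<tau>" "f (insert w \<tau>) \<noteq> 0"
  using assms unfolding ind_boundary_def by (metis (no_types, lifting) mult_zero_right sum.neutral)

lemma boundary_supported: "f \<in> supported_on U \<Longrightarrow> bd f \<in> supported_on U"
  by (auto simp: supported_on_def elim!: boundary_nonzero)

lemma boundary_chains_supported: "W \<subseteq> U \<Longrightarrow> bd ` (ch k W :: ('a set \<Rightarrow> 'k::field) set) \<subseteq> supported_on U"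
  by (rule image_supported[OF chains_supported boundary_supported])

lemma boundary_avoiding: "g \<in> avoiding v \<Longrightarrow> bd g \<in> avoiding v"
  unfolding avoiding_def ind_boundary_def by auto

lemma boundary_chains:
  assumes "W \<subseteq> U" "f \<in> ch (Suc k) W"
  shows "bd f \<in> ch k W"
  unfolding ind_chains_def
proof (intro CollectI allI impI)
  fix \<tau> assume "bd f \<tau> \<noteq> 0"
  then obtain w where w: "w \<in> U - \<tau>" "f (insert w \<tau>) \<noteq> 0" by (rule boundary_nonzero)
  hence "insert w \<tau> \<in> ind_faces W E" "card (insert w \<tau>) = Suc k"
    using assms(2) by (auto simp: ind_chains_def)
  moreover have "finite \<tau>" using ind_faces_finite[OF assms(1) calculation(1)] by simp
  ultimately show "\<tau> \<in> ind_faces W E \<and> card \<tau> = k"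
    using w by (auto simp: ind_faces_def)
qed

lemma boundary_chains_0:
  assumes "f \<in> ch 0 W" "W \<subseteq> U"
  shows "bd f = 0"
proof -
  have "f (insert w \<tau>) = 0" for w \<tau>
    using assms ind_faces_finite[OF assms(2), of "insert w \<tau>"] by (auto simp: ind_chains_def)
  thus ?thesis by (simp add: ind_boundary_def fun_eq_iff)
qed

lemma boundary_boundary:
  assumes f: "f \<in> supported_on U"
  shows "bd (bd f) = (0 :: 'a set \<Rightarrow> 'k::field)"
proof
  fix \<rho> :: "'a set"
  define s where "s = (\<lambda>(X::'a set) w. (-1::'k) ^ card {u\<in>X. u < w})"
  define g where "g = (\<lambda>v w. s \<rho> v * (s (insert v \<rho>) w * f (insert w (insert v \<rho>))))"
  have "U - insert v \<rho> = (U - \<rho>) - {v}" for v by auto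
  hence "bd (bd f) \<rho> = (\<Sum>v\<in>U - \<rho>. \<Sum>w\<in>(U - \<rho>) - {v}. g v w)"
    unfolding ind_boundary_def g_def s_def by (simp add: sum_distrib_left)
  also have "\<dots> = 0"
  proof (rule sum_pairs_antisym_eq_0)
    fix v w assume vw: "v \<in> U - \<rho>" "w \<in> U - \<rho>" "v < w"
    have ins: "insert v (insert w \<rho>) = insert w (insert v \<rho>)" by auto
    show "g v w + g w v = 0"
    proof (cases "f (insert w (insert v \<rho>)) = 0")
      case True
      thus ?thesis using ins by (simp add: g_def)
    next
      case False
      hence "finite \<rho>" using f finite_U by (auto simp: supported_on_def intro: finite_subset)
      hence "s (insert v \<rho>) w = - s \<rho> w" "s (insert w \<rho>) v = s \<rho> v"
        using vw card_filter_insert[of \<rho> v "\<lambda>u. u < w"] card_filter_insert[of \<rho> w "\<lambda>u. u < v"]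
        by (auto simp: s_def)
      thus ?thesis using ins by (simp add: g_def algebra_simps)
    qed
  qed (simp add: finite_U)
  finally show "bd (bd f) \<rho> = 0 \<rho>" by simp
qed

lemma join_chains:
  assumes "W \<subseteq> U" "v \<in> W" "g \<in> ch k (del_nbhd E W v)"
  shows "join v g \<in> ch (Suc k) W"
  unfolding ind_chains_def
proof (intro CollectI allI impI)
  fix \<sigma> assume "join v g \<sigma> \<noteq> 0"
  hence v\<sigma>: "v \<in> \<sigma>" and "g (\<sigma> - {v}) \<noteq> 0" by (auto simp: join_def split: if_splits)
  hence fa: "\<sigma> - {v} \<in> ind_faces (del_nbhd E W v) E" "card (\<sigma> - {v}) = k"
    using assms(3) by (auto simp: ind_chains_def)
  have "insert v (\<sigma> - {v}) = \<sigma>" using v\<sigma> by auto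
  moreover have "finite (\<sigma> - {v})"
    using ind_faces_finite[OF _ fa(1)] assms(1) by (auto simp: del_nbhd_def)
  ultimately show "\<sigma> \<in> ind_faces W E \<and> card \<sigma> = Suc k"
    using insert_in_ind_faces[OF assms(2) fa(1)] fa(2) by (metis card_insert_disjoint Diff_iff singletonI)
qed

lemma restrict_with_boundary_join:
  fixes g :: "'a set \<Rightarrow> 'k::field"
  assumes "v \<in> U" "g \<in> supported_on U" "g \<in> avoiding v"
  shows "restrict_with v (bd (join v g)) = join v (bd g)"
proof
  fix \<sigma>
  show "restrict_with v (bd (join v g)) \<sigma> = join v (bd g) \<sigma>"
  proof (cases "v \<in> \<sigma>")
    case False
    thus ?thesis by (simp add: restrict_with_def join_def)
  next
    case True
    define \<rho> where "\<rho> = \<sigma> - {v}"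
    have \<sigma>: "\<sigma> = insert v \<rho>" "v \<notin> \<rho>" using True by (auto simp: \<rho>_def)
    have "U - \<rho> = insert v (U - \<sigma>)" "v \<notin> U - \<sigma>" using assms(1) \<sigma> by auto
    hence "(\<Sum>w\<in>U - \<rho>. (-1) ^ card {u \<in> \<rho>. u < w} * g (insert w \<rho>))
        = (\<Sum>w\<in>U - \<sigma>. (-1) ^ card {u \<in> \<rho>. u < w} * g (insert w \<rho>))"
      using assms(3) finite_U by (simp add: avoiding_def)
    hence rhs: "join v (bd g) \<sigma> = (\<Sum>w\<in>U - \<sigma>. sign_above v \<rho> * ((-1) ^ card {u \<in> \<rho>. u < w} * g (insert w \<rho>)))"
      using True by (simp add: join_def ind_boundary_def \<rho>_def sum_distrib_left)
    have "restrict_with v (bd (join v g)) \<sigma>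
        = (\<Sum>w\<in>U - \<sigma>. (-1) ^ card {u \<in> \<sigma>. u < w} * (sign_above v (insert w \<rho>) * g (insert w \<rho>)))"
      using True \<sigma> by (auto simp: restrict_with_def ind_boundary_def join_def insert_Diff_if intro!: sum.cong)
    also have "\<dots> = (\<Sum>w\<in>U - \<sigma>. sign_above v \<rho> * ((-1) ^ card {u \<in> \<rho>. u < w} * g (insert w \<rho>)))"
    proof (rule sum.cong[OF refl])
      fix w assume w: "w \<in> U - \<sigma>"
      show "(-1) ^ card {u \<in> \<sigma>. u < w} * (sign_above v (insert w \<rho>) * g (insert w \<rho>))
          = sign_above v \<rho> * ((-1) ^ card {u \<in> \<rho>. u < w} * g (insert w \<rho>))"
      proof (cases "g (insert w \<rho>) = 0")
        case False
        hence "finite \<rho>" using assms(2) finite_U by (auto simp: supported_on_def intro: finite_subset)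
        hence "(-1) ^ card {u \<in> \<sigma>. u < w} * sign_above v (insert w \<rho>)
            = sign_above v \<rho> * ((-1) ^ card {u \<in> \<rho>. u < w} :: 'k)"
          using sign_join_commute[of \<rho> v w] w \<sigma> by simp
        hence "(-1) ^ card {u \<in> \<sigma>. u < w} * sign_above v (insert w \<rho>) * g (insert w \<rho>)
            = sign_above v \<rho> * (-1) ^ card {u \<in> \<rho>. u < w} * g (insert w \<rho>)"
          by (rule arg_cong)
        thus ?thesis by (simp only: mult.assoc)
      qed simp
    qed
    finally show ?thesis using rhs by simp
  qed
qed

lemma restrict_without_boundary_join:
  assumes "v \<in> U" "g \<in> avoiding v"
  shows "restrict_without v (bd (join v g)) = twist v g"
proof
  fix \<rho>
  show "restrict_without v (bd (join v g)) \<rho> = twist v g \<rho>"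
  proof (cases "v \<in> \<rho>")
    case False
    have "bd (join v g) \<rho> = (-1) ^ card {u \<in> \<rho>. u < v} * join v g (insert v \<rho>)
        + (\<Sum>w\<in>U - \<rho> - {v}. (-1) ^ card {u \<in> \<rho>. u < w} * join v g (insert w \<rho>))"
      unfolding ind_boundary_def using False assms(1) finite_U by (intro sum.remove) auto
    also have "(\<Sum>w\<in>U - \<rho> - {v}. (-1) ^ card {u \<in> \<rho>. u < w} * join v g (insert w \<rho>)) = 0"
      using False by (intro sum.neutral) (auto simp: join_def)
    also have "join v g (insert v \<rho>) = sign_above v \<rho> * g \<rho>"
      using False by (simp add: join_def)
    finally show ?thesis using False by (simp add: restrict_without_def twist_def mult.assoc)
  qed (simp add: restrict_without_def twist_def)
qed

lemma boundary_del_vertex_subset: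
  assumes "W \<subseteq> U"
  shows "bd ` (ch (Suc k) (W - {v}) :: ('a set \<Rightarrow> 'k::field) set)
    \<subseteq> {x \<in> bd ` ch (Suc k) W. restrict_with v x = 0}"
proof
  fix x assume "x \<in> bd ` (ch (Suc k) (W - {v}) :: ('a set \<Rightarrow> 'k) set)"
  then obtain f :: "'a set \<Rightarrow> 'k" where f: "f \<in> ch (Suc k) (W - {v})" "x = bd f" by blast
  have "f \<in> ch (Suc k) W" using f(1) chains_mono[of "W - {v}" W] by blast
  moreover have "restrict_with v (bd f) = 0"
    using f(1) chains_avoiding[of v "W - {v}"] by (intro restrict_with_avoiding boundary_avoiding) blast
  ultimately show "x \<in> {x \<in> bd ` ch (Suc k) W. restrict_with v x = 0}" using f(2) by blast
qed

lemma join_boundary_link_subset: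
  assumes "W \<subseteq> U" "v \<in> W"
  shows "join v ` bd ` (ch k (del_nbhd E W v) :: ('a set \<Rightarrow> 'k::field) set)
    \<subseteq> restrict_with v ` bd ` ch (Suc k) W"
proof
  fix x assume "x \<in> join v ` bd ` (ch k (del_nbhd E W v) :: ('a set \<Rightarrow> 'k) set)"
  then obtain g :: "'a set \<Rightarrow> 'k" where g: "g \<in> ch k (del_nbhd E W v)" "x = join v (bd g)" by blast
  have "del_nbhd E W v \<subseteq> U" "v \<notin> del_nbhd E W v" using assms(1) by (auto simp: del_nbhd_def)
  hence "g \<in> supported_on U" "g \<in> avoiding v"
    using g(1) chains_supported[of "del_nbhd E W v" k] chains_avoiding[of v "del_nbhd E W v" k] by blast+
  hence "x = restrict_with v (bd (join v g))"
    using restrict_with_boundary_join[of v g] g(2) assms by auto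
  thus "x \<in> restrict_with v ` bd ` ch (Suc k) W" using join_chains[OF assms g(1)] by blast
qed

lemma twist_link_subset:
  assumes "W \<subseteq> U" "v \<in> W"
  shows "twist v ` (ch k (del_nbhd E W v) :: ('a set \<Rightarrow> 'k::field) set)
    \<subseteq> restrict_without v ` bd ` ch (Suc k) W"
proof
  fix x assume "x \<in> twist v ` (ch k (del_nbhd E W v) :: ('a set \<Rightarrow> 'k) set)"
  then obtain g :: "'a set \<Rightarrow> 'k" where g: "g \<in> ch k (del_nbhd E W v)" "x = twist v g" by blast
  have "v \<notin> del_nbhd E W v" by (simp add: del_nbhd_def)
  hence "g \<in> avoiding v" using g(1) chains_avoiding by blast
  hence "x = restrict_without v (bd (join v g))"
    using restrict_without_boundary_join[of v g] g(2) assms by auto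
  thus "x \<in> restrict_without v ` bd ` ch (Suc k) W" using join_chains[OF assms g(1)] by blast
qed

text \<open>Restriction to the faces containing \<open>v\<close> maps \<open>\<partial>C\<^sub>k\<^sub>+\<^sub>1(W)\<close> onto a space containing the
  cone over \<open>\<partial>C\<^sub>k(W - N[v])\<close>, with kernel containing \<open>\<partial>C\<^sub>k\<^sub>+\<^sub>1(W - v)\<close>.\<close>

lemma rank_del_add_rank_link_le:
  assumes "W \<subseteq> U" "v \<in> W"
  shows "VS.dim (bd ` (ch (Suc k) (W - {v}) :: ('a set \<Rightarrow> 'k::field) set))
       + VS.dim (bd ` (ch k (del_nbhd E W v) :: ('a set \<Rightarrow> 'k) set))
       \<le> VS.dim (bd ` (ch (Suc k) W :: ('a set \<Rightarrow> 'k) set))"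
proof -
  define S where "S = bd ` (ch (Suc k) W :: ('a set \<Rightarrow> 'k) set)"
  define B where "B = bd ` (ch k (del_nbhd E W v) :: ('a set \<Rightarrow> 'k) set)"
  have LU: "del_nbhd E W v \<subseteq> U" "v \<notin> del_nbhd E W v" using assms by (auto simp: del_nbhd_def)
  have S_supp: "S \<subseteq> supported_on U"
    unfolding S_def by (rule boundary_chains_supported[OF assms(1)])
  have SF: "S \<subseteq> VS.span (unit_fun ` Pow U)" by (rule supported_in_span[OF S_supp])
  have "VS.dim (bd ` (ch (Suc k) (W - {v}) :: ('a set \<Rightarrow> 'k) set)) \<le> VS.dim {x\<in>S. restrict_with v x = 0}"
  proof (rule dim_mono_in_span[OF finite_unit_funs])
    show "{x\<in>S. restrict_with v x = 0} \<subseteq> VS.span (unit_fun ` Pow U)" using SF by blast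
    show "bd ` (ch (Suc k) (W - {v}) :: ('a set \<Rightarrow> 'k) set) \<subseteq> {x\<in>S. restrict_with v x = 0}"
      unfolding S_def by (rule boundary_del_vertex_subset[OF assms(1)])
  qed
  moreover have "VS.dim B \<le> VS.dim (join v ` B)"
  proof (rule dim_le_dim_inj_image[OF finite_unit_funs _ join_hom])
    show "join v ` B \<subseteq> VS.span (unit_fun ` Pow U)"
      unfolding B_def using assms
      by (intro supported_in_span image_supported[OF boundary_chains_supported[OF LU(1)] join_supported]) auto
    have "B \<subseteq> avoiding v"
      unfolding B_def using chains_avoiding[OF LU(2)] boundary_avoiding by blast
    hence "VS.span B \<subseteq> avoiding v" using avoiding_subspace by (rule VS.span_minimal)
    thus "inj_on (join v) (VS.span B)" by (rule inj_on_subset[OF join_inj])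
  qed
  moreover have "VS.dim (join v ` B) \<le> VS.dim (restrict_with v ` S)"
  proof (rule dim_mono_in_span[OF finite_unit_funs])
    show "restrict_with v ` S \<subseteq> VS.span (unit_fun ` Pow U)"
      by (intro supported_in_span image_supported[OF S_supp restrict_with_supported])
    show "join v ` B \<subseteq> restrict_with v ` S"
      unfolding S_def B_def by (rule join_boundary_link_subset[OF assms])
  qed
  moreover have "VS.dim {x\<in>S. restrict_with v x = 0} + VS.dim (restrict_with v ` S) \<le> VS.dim S"
    by (rule dim_kernel_add_dim_image_le[OF finite_unit_funs SF restrict_with_hom])
  ultimately show ?thesis unfolding S_def B_def by linarith
qed

lemma card_faces_le_rank_isolated:
  assumes "W \<subseteq> U" "v \<in> W" "\<forall>u\<in>W. \<not> E v u"
  shows "card (faces_card (W - {v}) E k) \<le> VS.dim (bd ` (ch (Suc k) W :: ('a set \<Rightarrow> 'k::field) set))"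
proof -
  define S where "S = bd ` (ch (Suc k) W :: ('a set \<Rightarrow> 'k) set)"
  define C where "C = (ch k (W - {v}) :: ('a set \<Rightarrow> 'k) set)"
  have del: "del_nbhd E W v = W - {v}" using assms(3) edge_irrefl unfolding del_nbhd_def by auto
  have LU: "W - {v} \<subseteq> U" using assms by auto
  have S_supp: "S \<subseteq> supported_on U"
    unfolding S_def by (rule boundary_chains_supported[OF assms(1)])
  have SF: "S \<subseteq> VS.span (unit_fun ` Pow U)" by (rule supported_in_span[OF S_supp])
  have "card (faces_card (W - {v}) E k) = VS.dim C"
    unfolding C_def by (rule dim_chains[OF LU, symmetric])
  also have "\<dots> \<le> VS.dim (twist v ` C)"
  proof (rule dim_le_dim_inj_image[OF finite_unit_funs _ twist_hom])
    show "twist v ` C \<subseteq> VS.span (unit_fun ` Pow U)"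
      unfolding C_def
      by (intro supported_in_span image_supported[OF chains_supported[OF LU] twist_supported])
    have "C \<subseteq> avoiding v" unfolding C_def by (rule chains_avoiding) simp
    moreover have "VS.span C = C" unfolding C_def using chains_subspace by (rule VS.span_eq_iff[THEN iffD2])
    ultimately show "inj_on (twist v) (VS.span C)" using inj_on_subset[OF twist_inj] by (simp only:)
  qed
  also have "\<dots> \<le> VS.dim (restrict_without v ` S)"
  proof (rule dim_mono_in_span[OF finite_unit_funs])
    show "restrict_without v ` S \<subseteq> VS.span (unit_fun ` Pow U)"
      by (intro supported_in_span image_supported[OF S_supp restrict_without_supported])
    show "twist v ` C \<subseteq> restrict_without v ` S"
      using twist_link_subset[OF assms(1,2), of k] unfolding S_def C_def del .
  qed
  also have "\<dots> \<le> VS.dim S" by (rule dim_image_le[OF finite_unit_funs SF restrict_without_hom])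
  finally show ?thesis unfolding S_def .
qed

lemma faces_card_finite: "W \<subseteq> U \<Longrightarrow> finite (faces_card W E k)"
  by (rule finite_subset[of _ "Pow U"]) (auto simp: faces_card_def ind_faces_def finite_U)

lemma faces_card_0:
  assumes "W \<subseteq> U"
  shows "faces_card W E 0 = {{}}"
proof
  show "faces_card W E 0 \<subseteq> {{}}"
  proof
    fix \<sigma> assume "\<sigma> \<in> faces_card W E 0"
    hence "\<sigma> \<in> ind_faces W E" "card \<sigma> = 0" by (auto simp: faces_card_def)
    moreover have "finite \<sigma>" using ind_faces_finite[OF assms] calculation(1) by blast
    ultimately show "\<sigma> \<in> {{}}" by simp
  qed
  show "{{}} \<subseteq> faces_card W E 0" by (auto simp: faces_card_def ind_faces_def)
qed

lemma faces_card_card_gt: "W \<subseteq> U \<Longrightarrow> card U < k \<Longrightarrow> faces_card W E k = {}"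
  using card_mono[OF finite_U] by (fastforce simp: faces_card_def ind_faces_def)

lemma insert_in_faces_card:
  assumes "W \<subseteq> U" "v \<in> W" "\<rho> \<in> faces_card (del_nbhd E W v) E k"
  shows "insert v \<rho> \<in> faces_card W E (Suc k)"
proof -
  have \<rho>: "\<rho> \<in> ind_faces (del_nbhd E W v) E" "card \<rho> = k" using assms(3) by (auto simp: faces_card_def)
  have "finite \<rho>" using ind_faces_finite[OF _ \<rho>(1)] assms(1) by (auto simp: del_nbhd_def)
  moreover have "v \<notin> \<rho>" using ind_faces_subset[OF \<rho>(1)] by (auto simp: del_nbhd_def)
  ultimately show ?thesis using \<rho> insert_in_ind_faces[OF assms(2) \<rho>(1)] by (simp add: faces_card_def)
qed

lemma remove_from_faces_card:
  assumes "\<sigma> \<in> faces_card W E (Suc k)" "v \<in> \<sigma>"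
  shows "\<sigma> - {v} \<in> faces_card (del_nbhd E W v) E k"
proof -
  have "finite \<sigma>" using assms(1) card.infinite by (fastforce simp: faces_card_def)
  thus ?thesis using assms remove_from_ind_faces by (auto simp: faces_card_def)
qed

lemma faces_card_Suc:
  assumes "W \<subseteq> U" "v \<in> W"
  shows "faces_card W E (Suc k)
    = faces_card (W - {v}) E (Suc k) \<union> insert v ` faces_card (del_nbhd E W v) E k"
proof (intro equalityI subsetI)
  fix \<sigma> assume \<sigma>: "\<sigma> \<in> faces_card W E (Suc k)"
  show "\<sigma> \<in> faces_card (W - {v}) E (Suc k) \<union> insert v ` faces_card (del_nbhd E W v) E k"
  proof (cases "v \<in> \<sigma>")
    case True
    hence "\<sigma> = insert v (\<sigma> - {v})" by auto
    thus ?thesis using remove_from_faces_card[OF \<sigma> True] by blast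
  qed (use \<sigma> in \<open>auto simp: faces_card_def ind_faces_def\<close>)
next
  fix \<sigma> assume "\<sigma> \<in> faces_card (W - {v}) E (Suc k) \<union> insert v ` faces_card (del_nbhd E W v) E k"
  thus "\<sigma> \<in> faces_card W E (Suc k)"
  proof
    assume "\<sigma> \<in> faces_card (W - {v}) E (Suc k)"
    thus ?thesis by (auto simp: faces_card_def ind_faces_def)
  qed (use insert_in_faces_card[OF assms] in blast)
qed

definition boundary_rank :: "'k::field itself \<Rightarrow> nat \<Rightarrow> 'a set \<Rightarrow> nat" where
  "boundary_rank K k W = VS.dim (bd ` (ch k W :: ('a set \<Rightarrow> 'k) set))"

definition face_count :: "nat \<Rightarrow> 'a set \<Rightarrow> nat" where
  "face_count k W = card (faces_card W E k)"

definition total_faces :: "'a set \<Rightarrow> nat" where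
  "total_faces W = (\<Sum>k\<le>Suc (card U). face_count k W)"

definition total_rank :: "'k::field itself \<Rightarrow> 'a set \<Rightarrow> nat" where
  "total_rank K W = (\<Sum>k\<le>Suc (card U). boundary_rank K k W)"

text \<open>Since \<open>dim Z\<^sub>k = dim C\<^sub>k - rank \<partial>\<^sub>k\<close>, summing the Betti numbers \<open>dim Z\<^sub>k - rank \<partial>\<^sub>k\<^sub>+\<^sub>1\<close> of
  \<open>Ind(G[W])\<close> over all degrees gives exactly this quantity.\<close>

definition betti_bound :: "'k::field itself \<Rightarrow> 'a set \<Rightarrow> real" where
  "betti_bound K W = real (total_faces W) - 2 * real (total_rank K W)"

lemma face_count_Suc:
  assumes "W \<subseteq> U" "v \<in> W"
  shows "face_count (Suc k) W = face_count (Suc k) (W - {v}) + face_count k (del_nbhd E W v)"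
proof -
  have "inj_on (insert v) (faces_card (del_nbhd E W v) E k)"
    by (rule inj_onI) (auto simp: faces_card_def ind_faces_def del_nbhd_def insert_ident)
  moreover have "faces_card (W - {v}) E (Suc k) \<inter> insert v ` faces_card (del_nbhd E W v) E k = {}"
    by (auto simp: faces_card_def ind_faces_def)
  moreover have "W - {v} \<subseteq> U" "del_nbhd E W v \<subseteq> U" using assms(1) by (auto simp: del_nbhd_def)
  ultimately show ?thesis
    unfolding face_count_def faces_card_Suc[OF assms]
    by (simp add: card_Un_disjoint faces_card_finite card_image)
qed

lemma face_count_card_gt: "W \<subseteq> U \<Longrightarrow> card U < k \<Longrightarrow> face_count k W = 0"
  by (simp add: face_count_def faces_card_card_gt)

lemma boundary_rank_0: "W \<subseteq> U \<Longrightarrow> boundary_rank K 0 W = 0"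
  unfolding boundary_rank_def by (rule dim_subset_zero) (use boundary_chains_0 in blast)

lemma boundary_rank_card_gt: "W \<subseteq> U \<Longrightarrow> card U < k \<Longrightarrow> boundary_rank K k W = 0"
  unfolding boundary_rank_def
proof (rule dim_subset_zero)
  assume "W \<subseteq> U" "card U < k"
  hence "ch k W \<subseteq> {0}" by (rule chains_card_gt)
  moreover have "bd 0 = 0" using module_hom.zero[OF boundary_hom] by simp
  ultimately show "bd ` ch k W \<subseteq> {0}" by auto
qed

lemma total_rank_shift: "W \<subseteq> U \<Longrightarrow> total_rank K W = (\<Sum>k\<le>card U. boundary_rank K (Suc k) W)"
  unfolding total_rank_def by (subst sum.atMost_Suc_shift) (simp add: boundary_rank_0)

lemma total_rank_drop_last: "W \<subseteq> U \<Longrightarrow> total_rank K W = (\<Sum>k\<le>card U. boundary_rank K k W)"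
  unfolding total_rank_def by (simp add: boundary_rank_card_gt)

lemma total_faces_drop_last: "W \<subseteq> U \<Longrightarrow> total_faces W = (\<Sum>k\<le>card U. face_count k W)"
  unfolding total_faces_def by (simp add: face_count_card_gt)

lemma total_faces_split:
  assumes "W \<subseteq> U" "v \<in> W"
  shows "total_faces W = total_faces (W - {v}) + total_faces (del_nbhd E W v)"
proof -
  have sub: "W - {v} \<subseteq> U" "del_nbhd E W v \<subseteq> U" using assms(1) by (auto simp: del_nbhd_def)
  have c0: "face_count 0 W = face_count 0 (W - {v})"
    using faces_card_0 assms(1) sub(1) by (simp add: face_count_def)
  have "total_faces W = face_count 0 W + (\<Sum>k\<le>card U. face_count (Suc k) W)"
    unfolding total_faces_def by (rule sum.atMost_Suc_shift)
  also have "\<dots> = face_count 0 (W - {v}) + (\<Sum>k\<le>card U. face_count (Suc k) (W - {v}))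
      + (\<Sum>k\<le>card U. face_count k (del_nbhd E W v))"
    using c0 face_count_Suc[OF assms] by (simp add: sum.distrib)
  also have "face_count 0 (W - {v}) + (\<Sum>k\<le>card U. face_count (Suc k) (W - {v})) = total_faces (W - {v})"
    unfolding total_faces_def by (rule sum.atMost_Suc_shift[symmetric])
  also have "(\<Sum>k\<le>card U. face_count k (del_nbhd E W v)) = total_faces (del_nbhd E W v)"
    by (rule total_faces_drop_last[OF sub(2), symmetric])
  finally show ?thesis .
qed

lemma total_rank_split_le:
  assumes "W \<subseteq> U" "v \<in> W"
  shows "total_rank K (W - {v}) + total_rank K (del_nbhd E W v) \<le> total_rank K W"
proof -
  have sub: "W - {v} \<subseteq> U" "del_nbhd E W v \<subseteq> U" using assms(1) by (auto simp: del_nbhd_def)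
  have "total_rank K (W - {v}) + total_rank K (del_nbhd E W v)
      = (\<Sum>k\<le>card U. boundary_rank K (Suc k) (W - {v}) + boundary_rank K k (del_nbhd E W v))"
    unfolding total_rank_shift[OF sub(1)] total_rank_drop_last[OF sub(2)] by (simp add: sum.distrib)
  also have "\<dots> \<le> (\<Sum>k\<le>card U. boundary_rank K (Suc k) W)"
    using rank_del_add_rank_link_le[OF assms] by (intro sum_mono) (simp add: boundary_rank_def)
  also have "\<dots> = total_rank K W" by (rule total_rank_shift[OF assms(1), symmetric])
  finally show ?thesis .
qed

lemma total_faces_le_total_rank_isolated:
  assumes "W \<subseteq> U" "v \<in> W" "\<forall>u\<in>W. \<not> E v u"
  shows "total_faces (W - {v}) \<le> total_rank K W"
proof -
  have "total_faces (W - {v}) = (\<Sum>k\<le>card U. face_count k (W - {v}))"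
    using assms(1) by (intro total_faces_drop_last) auto
  also have "\<dots> \<le> (\<Sum>k\<le>card U. boundary_rank K (Suc k) W)"
    using card_faces_le_rank_isolated[OF assms] by (intro sum_mono) (simp add: face_count_def boundary_rank_def)
  also have "\<dots> = total_rank K W" by (rule total_rank_shift[OF assms(1), symmetric])
  finally show ?thesis .
qed

lemma betti_bound_branch:
  assumes "W \<subseteq> U" "v \<in> W"
  shows "betti_bound K W \<le> betti_bound K (W - {v}) + betti_bound K (del_nbhd E W v)"
  using total_faces_split[OF assms] total_rank_split_le[OF assms, of K]
  unfolding betti_bound_def by (simp add: of_nat_add[symmetric] del: of_nat_add)

lemma betti_bound_isolated:
  assumes "W \<subseteq> U" "v \<in> W" "\<forall>u\<in>W. \<not> E v u"
  shows "betti_bound K W \<le> 0"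
proof -
  have "del_nbhd E W v = W - {v}" using assms(3) edge_irrefl unfolding del_nbhd_def by blast
  hence "total_faces W = 2 * total_faces (W - {v})" using total_faces_split[OF assms(1,2)] by simp
  thus ?thesis using total_faces_le_total_rank_isolated[OF assms, of K] unfolding betti_bound_def by simp
qed

lemma betti_bound_empty: "betti_bound K {} \<le> 1"
proof -
  have "face_count 0 {} = 1" using faces_card_0[of "{}"] by (simp add: face_count_def)
  moreover have "face_count (Suc k) {} = 0" for k
    by (simp add: face_count_def faces_card_def ind_faces_def)
  ultimately have "total_faces {} = 1"
    unfolding total_faces_def sum.atMost_Suc_shift by simp
  thus ?thesis unfolding betti_bound_def by simp
qed

lemma red_betti_le:
  fixes K :: "'k::field itself"
  shows "int (red_betti K U E k) \<le> int (face_count k U) - int (boundary_rank K k U) - int (boundary_rank K (Suc k) U)"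
proof -
  define Z where "Z = {f :: 'a set \<Rightarrow> 'k. f \<in> ch k U \<and> bd f = 0}"
  have chF: "(ch k U :: ('a set \<Rightarrow> 'k) set) \<subseteq> VS.span (unit_fun ` Pow U)"
    by (intro supported_in_span chains_supported) simp
  have "VS.dim Z + boundary_rank K k U \<le> face_count k U"
    using dim_kernel_add_dim_image_le[OF finite_unit_funs chF boundary_hom] dim_chains[OF order_refl, of k, where 'k='k]
    unfolding Z_def boundary_rank_def face_count_def by simp
  moreover have "boundary_rank K (Suc k) U \<le> VS.dim Z"
    unfolding boundary_rank_def
  proof (rule dim_mono_in_span[OF finite_unit_funs])
    show "Z \<subseteq> VS.span (unit_fun ` Pow U)" using chF unfolding Z_def by auto
    show "bd ` (ch (Suc k) U :: ('a set \<Rightarrow> 'k) set) \<subseteq> Z"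
      unfolding Z_def using boundary_chains[of U] boundary_boundary chains_supported[of U] by blast
  qed
  moreover have "red_betti K U E k = VS.dim Z - boundary_rank K (Suc k) U"
    unfolding red_betti_def Z_def boundary_rank_def by simp
  ultimately show ?thesis by linarith
qed

lemma total_red_betti_le_betti_bound:
  "real (total_red_betti (K :: 'k::field itself) U E) \<le> betti_bound K U"
proof -
  have "int (total_red_betti K U E) = (\<Sum>k\<le>card U. int (red_betti K U E k))"
    unfolding total_red_betti_def by (simp add: atLeast0AtMost)
  also have "\<dots> \<le> (\<Sum>k\<le>card U. int (face_count k U) - int (boundary_rank K k U) - int (boundary_rank K (Suc k) U))"
    by (intro sum_mono red_betti_le)
  also have "\<dots> = int (\<Sum>k\<le>card U. face_count k U) - int (\<Sum>k\<le>card U. boundary_rank K k U)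
      - int (\<Sum>k\<le>card U. boundary_rank K (Suc k) U)"
    by (simp add: sum_subtractf)
  also have "\<dots> = int (total_faces U) - int (total_rank K U) - int (total_rank K U)"
    using total_faces_drop_last[of U] total_rank_drop_last[of U K] total_rank_shift[of U K] by simp
  finally show ?thesis unfolding betti_bound_def by linarith
qed

end

theorem proposition6p5:
  fixes V :: "'a::linorder set" and E :: "'a \<Rightarrow> 'a \<Rightarrow> bool"
  assumes "simple_graph V E" and "triangle_free V E"
  shows "real (total_red_betti TYPE('k::field) V E) \<le> Gamma4 ^ card V"
proof -
  interpret g: ordered_graph V E by unfold_locales (rule assms(1))
  interpret c: branching_bound V E "g.betti_bound TYPE('k)"
    by unfold_locales (use assms(2) g.betti_bound_branch g.betti_bound_isolated g.betti_bound_empty in auto)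
  have "real (total_red_betti TYPE('k) V E) \<le> g.betti_bound TYPE('k) V"
    by (rule g.total_red_betti_le_betti_bound)
  also have "\<dots> \<le> Gamma4 ^ card V" by (rule c.bounded_by_Gamma4_pow[OF order_refl])
  finally show ?thesis .
qed

end
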